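(* Let $\mu_X\in\mathbb R$, $\sigma_X>0$, $R,R_c\ge0$, $P\ge0$. For any distribution $p_{\hat X}$ on $\mathbb R$ with finite second moment, mean $\mu_{\hat X}$ and variance $\sigma_{\hat X}^2$ such that $\phi_{KL}(p_{\hat X}\|\mathcal N(\mu_X,\sigma_X^2))\le P$, we have $$D(R+R_c|p_{\hat X})\ge\sigma_{\hat X}^2\exp\Big(-2\big(R+R_c+P-\phi_{KL}(\mathcal N(\mu_{\hat X},\sigma_{\hat X}^2)\|\mathcal N(\mu_X,\sigma_X^2))\big)\Big).$$
   Context: All logarithms are natural. $\phi_{KL}(q\|p):=\mathbb E_{Z\sim q}[\log\frac{q(Z)}{p(Z)}]$ (or $+\infty$ if $q\not\ll p$). For a distribution $p$ of a real random variable $Z$ with finite second moment and $r\ge0$, $D(r|p):=\min_{p_{V|Z}:\,I(Z;V)\le r}\mathbb E[(Z-V)^2]$ (quadratic distortion-rate function). *)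

theory Defs
  imports "HOL-Probability.Probability"
begin

text \<open>KL divergence phi_KL(q||p) = E_q[log dq/dp], +infinity if q is not absolutely
continuous w.r.t. p (or the log-likelihood ratio is not q-integrable; for probability
measures the negative part is always integrable, so this is exactly the +infinity case).\<close>
definition phi_KL :: "'a measure \<Rightarrow> 'a measure \<Rightarrow> ereal" where
  "phi_KL q p =
     (if sets q = sets p \<and> absolutely_continuous p q
         \<and> integrable q (\<lambda>x. ln (enn2real (RN_deriv p q x)))
      then ereal (\<integral>x. ln (enn2real (RN_deriv p q x)) \<partial>q)
      else \<infinity>)"

definition gauss :: "real \<Rightarrow> real \<Rightarrow> real measure" where
  "gauss mu s2 = (if s2 > 0 then density lborel (normal_density mu (sqrt s2))
                  else return borel mu)"

definition mutual_info :: "(real \<times> real) measure \<Rightarrow> ereal" where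
  "mutual_info J = phi_KL J (distr J borel fst \<Otimes>\<^sub>M distr J borel snd)"

text \<open>Quadratic distortion-rate function D(r|p): infimum over all joint distributions
of (Z,V) with Z ~ p and I(Z;V) <= r (equivalently over all channels p_{V|Z}).\<close>
definition distortion_rate :: "real \<Rightarrow> real measure \<Rightarrow> ennreal" where
  "distortion_rate r p =
     (INF J \<in> {J. prob_space J \<and> sets J = sets (borel \<Otimes>\<^sub>M borel)
                 \<and> distr J borel fst = p \<and> mutual_info J \<le> ereal r}.
        \<integral>\<^sup>+ z. ennreal ((fst z - snd z)\<^sup>2) \<partial>J)"

end

theory Submission
  imports Defs
begin

text \<open>This is the Shannon lower bound, argued without differential entropy. Let \<open>J\<close> be any
coupling of \<open>p\<close> with a reconstruction \<open>V\<close>, \<open>\<rho> = dJ / d(p \<otimes> Q)\<close> with \<open>Q\<close> the law of \<open>V\<close>, and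
\<open>\<phi>\<^sub>d\<close> the \<open>N(0, d)\<close> density; finite divergence from a Gaussian gives \<open>p\<close> a Lebesgue
density \<open>p(x)\<close>. Since \<open>\<phi>\<^sub>d(\<cdot> - v)\<close> integrates to 1 for every \<open>v\<close>, the
function \<open>h(x, v) = \<phi>\<^sub>d(x - v) / (p(x) \<rho>(x, v))\<close> has \<open>\<integral> h dJ \<le> 1\<close>, so \<open>\<integral> ln h dJ \<le> 0\<close>
by \<open>ln t \<le> t - 1\<close>. Writing \<open>p(x) = g(x) (dp/dG)(x)\<close> with \<open>g\<close> the density of \<open>G = N(\<mu>\<^sub>X, \<sigma>\<^sub>X\<^sup>2)\<close> and expanding the logarithm gives
\<open>ln(\<sigma>\<^sub>X\<^sup>2/d)/2 + E(X - \<mu>\<^sub>X)\<^sup>2/(2\<sigma>\<^sub>X\<^sup>2) - E(X - V)\<^sup>2/(2d) \<le> \<phi>\<^sub>K\<^sub>L(p\<parallel>G) + I(X;V)\<close>.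
Taking for \<open>d\<close> the claimed bound itself, the left side becomes \<open>1/2 + R + R\<^sub>c + P - E(X - V)\<^sup>2/(2d)\<close>
after inserting the closed form of the Gaussian divergence, whence \<open>E(X - V)\<^sup>2 \<ge> d\<close>.
The same absolute continuity makes the variance of \<open>p\<close> positive, so \<open>d > 0\<close>.\<close>

lemma ln_normal_density:
  "\<sigma> > 0 \<Longrightarrow> ln (normal_density \<mu> \<sigma> x) = - (x - \<mu>)\<^sup>2 / (2 * \<sigma>\<^sup>2) - ln (2 * pi * \<sigma>\<^sup>2) / 2"
  by (simp add: normal_density_def ln_div ln_sqrt)

lemma phi_KL_le_ereal_D:
  assumes "phi_KL q p \<le> ereal c"
  shows "sets q = sets p" "absolutely_continuous p q"
    and "integrable q (\<lambda>x. ln (enn2real (RN_deriv p q x)))"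
    and "(\<integral>x. ln (enn2real (RN_deriv p q x)) \<partial>q) \<le> c"
  using assms unfolding phi_KL_def by (auto split: if_splits)

lemma (in sigma_finite_measure) AE_RN_deriv_pos_finite:
  assumes "sigma_finite_measure N" "absolutely_continuous M N" "sets N = sets M"
  shows "AE x in N. 0 < RN_deriv M N x \<and> RN_deriv M N x \<noteq> \<infinity>"
proof -
  have "AE x in M. 0 < RN_deriv M N x \<longrightarrow> 0 < RN_deriv M N x \<and> RN_deriv M N x \<noteq> \<infinity>"
    using RN_deriv_finite[OF assms] by eventually_elim auto
  then have "AE x in density M (RN_deriv M N). 0 < RN_deriv M N x \<and> RN_deriv M N x \<noteq> \<infinity>"
    by (simp add: AE_density)
  then show ?thesis unfolding density_RN_deriv[OF assms(2,3)] .
qed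

lemma phi_KL_density_lborel:
  fixes f g :: "real \<Rightarrow> real"
  assumes [measurable]: "f \<in> borel_measurable borel" "g \<in> borel_measurable borel"
    and f_pos: "\<And>x. 0 < f x" and g_pos: "\<And>x. 0 < g x" and G: "prob_space (density lborel g)"
    and int: "integrable lborel (\<lambda>x. f x * ln (f x / g x))"
  shows "phi_KL (density lborel f) (density lborel g) = ereal (\<integral>x. f x * ln (f x / g x) \<partial>lborel)"
proof -
  define F where "F = density lborel f"
  define G where "G = density lborel g"
  interpret G: prob_space G unfolding G_def by (rule G)
  have FG: "F = density G (\<lambda>x. ennreal (f x / g x))"
    unfolding F_def G_def using f_pos g_pos
    by (subst density_density_eq)
       (auto simp: ennreal_mult[symmetric] less_imp_le g_pos[THEN less_imp_neq, symmetric] intro!: density_cong AE_I2)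
  have sets_eq: "sets F = sets G" by (simp add: F_def G_def)
  have ac: "absolutely_continuous G F"
    unfolding FG by (rule absolutely_continuousI_density) (simp add: G_def)
  have "AE x in G. ennreal (f x / g x) = RN_deriv G F x"
    unfolding FG by (rule G.RN_deriv_unique) (auto simp: G_def)
  then have "AE x in F. RN_deriv G F x = ennreal (f x / g x)"
    by (rule absolutely_continuous_AE[OF sets_eq ac, THEN AE_mp]) simp
  then have RN: "AE x in F. ln (enn2real (RN_deriv G F x)) = ln (f x / g x)"
    by eventually_elim (use f_pos g_pos in \<open>simp add: less_imp_le\<close>)
  have RN_meas: "(\<lambda>x. ln (enn2real (RN_deriv G F x))) \<in> borel_measurable F"
    using borel_measurable_RN_deriv[of G F] by (simp add: F_def G_def)
  have int_F: "integrable F (\<lambda>x. ln (f x / g x))"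
    unfolding F_def using int f_pos by (subst integrable_density) (auto simp: less_imp_le)
  have "integrable F (\<lambda>x. ln (enn2real (RN_deriv G F x)))"
    by (rule integrable_cong_AE_imp[OF int_F RN_meas]) (use RN in \<open>auto elim: AE_mp\<close>)
  moreover have "(\<integral>x. ln (enn2real (RN_deriv G F x)) \<partial>F) = (\<integral>x. f x * ln (f x / g x) \<partial>lborel)"
  proof -
    have "(\<integral>x. ln (enn2real (RN_deriv G F x)) \<partial>F) = (\<integral>x. ln (f x / g x) \<partial>F)"
      by (rule integral_cong_AE[OF RN_meas _ RN]) (simp add: F_def)
    also have "\<dots> = (\<integral>x. f x * ln (f x / g x) \<partial>lborel)"
      unfolding F_def using f_pos by (subst integral_density) (auto simp: less_imp_le)
    finally show ?thesis .
  qed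
  ultimately show ?thesis
    using sets_eq ac unfolding phi_KL_def F_def G_def by simp
qed

lemma phi_KL_gauss:
  fixes m s2 mX sX :: real
  assumes s2: "s2 > 0" and sX: "sX > 0"
  shows "phi_KL (gauss m s2) (gauss mX (sX\<^sup>2)) =
    ereal (ln (sX\<^sup>2 / s2) / 2 + (s2 + (m - mX)\<^sup>2) / (2 * sX\<^sup>2) - 1 / 2)"
proof -
  define s where "s = sqrt s2"
  have s: "s > 0" "s\<^sup>2 = s2" using s2 by (auto simp: s_def)
  define \<phi> where "\<phi> = normal_density m s"
  define g where "g = normal_density mX sX"
  define c0 where "c0 = ln (sX\<^sup>2 / s2) / 2 + (m - mX)\<^sup>2 / (2 * sX\<^sup>2)"
  define c1 where "c1 = 1 / (2 * sX\<^sup>2) - 1 / (2 * s2)"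
  define c2 where "c2 = (m - mX) / sX\<^sup>2"
  have \<phi>_pos: "\<And>x. 0 < \<phi> x" and g_pos: "\<And>x. 0 < g x"
    by (simp_all add: \<phi>_def g_def normal_density_pos s(1) sX)
  have integrand: "(\<lambda>x. \<phi> x * ln (\<phi> x / g x)) =
      (\<lambda>x. c0 * (\<phi> x * (x - m) ^ (2 * 0)) + c1 * (\<phi> x * (x - m) ^ (2 * 1)) + c2 * (\<phi> x * (x - m) ^ (2 * 0 + 1)))"
  proof
    fix x
    have "ln (\<phi> x / g x) = ln (\<phi> x) - ln (g x)" using \<phi>_pos[of x] g_pos[of x] by (simp add: ln_div)
    also have "\<dots> = c0 + c1 * (x - m)\<^sup>2 + c2 * (x - m)"
      unfolding \<phi>_def g_def ln_normal_density[OF s(1)] ln_normal_density[OF sX] s(2) c0_def c1_def c2_def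
      using s2 sX by (simp add: ln_div ln_mult field_simps power2_eq_square)
    finally have ln_ratio: "ln (\<phi> x / g x) = c0 + c1 * (x - m)\<^sup>2 + c2 * (x - m)" .
    show "\<phi> x * ln (\<phi> x / g x) =
        c0 * (\<phi> x * (x - m) ^ (2 * 0)) + c1 * (\<phi> x * (x - m) ^ (2 * 1)) + c2 * (\<phi> x * (x - m) ^ (2 * 0 + 1))"
      unfolding ln_ratio by (simp add: algebra_simps power2_eq_square)
  qed
  have "has_bochner_integral lborel (\<lambda>x. \<phi> x * (x - m) ^ (2 * 0)) 1"
    using normal_moment_even[OF s(1), of m 0] by (simp add: \<phi>_def)
  moreover have "has_bochner_integral lborel (\<lambda>x. \<phi> x * (x - m) ^ (2 * 1)) s2"
    using normal_moment_even[OF s(1), of m 1] by (simp add: \<phi>_def s(2))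
  moreover have "has_bochner_integral lborel (\<lambda>x. \<phi> x * (x - m) ^ (2 * 0 + 1)) 0"
    using normal_moment_odd[OF s(1), of m 0] by (simp add: \<phi>_def)
  ultimately have hb: "has_bochner_integral lborel (\<lambda>x. \<phi> x * ln (\<phi> x / g x)) (c0 * 1 + c1 * s2 + c2 * 0)"
    unfolding integrand by (intro has_bochner_integral_add has_bochner_integral_mult_right)
  have "phi_KL (density lborel \<phi>) (density lborel g) = ereal (\<integral>x. \<phi> x * ln (\<phi> x / g x) \<partial>lborel)"
    using \<phi>_pos g_pos integrable.intros[OF hb] prob_space_normal_density[OF sX]
    by (intro phi_KL_density_lborel) (auto simp: \<phi>_def g_def)
  then have "phi_KL (density lborel \<phi>) (density lborel g) = ereal (c0 * 1 + c1 * s2 + c2 * 0)"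
    using hb by (simp add: has_bochner_integral_integral_eq)
  moreover have "c0 * 1 + c1 * s2 + c2 * 0 = ln (sX\<^sup>2 / s2) / 2 + (s2 + (m - mX)\<^sup>2) / (2 * sX\<^sup>2) - 1 / 2"
    unfolding c0_def c1_def c2_def using s2 sX by (simp add: field_simps)
  moreover have "gauss m s2 = density lborel \<phi>" "gauss mX (sX\<^sup>2) = density lborel g"
    using s2 sX by (simp_all add: gauss_def \<phi>_def g_def s_def)
  ultimately show ?thesis by simp
qed

lemma phi_KL_gauss_le_ereal_D:
  fixes p :: "real measure"
  assumes sX: "sX > 0" and p: "prob_space p" and KL: "phi_KL p (gauss mX (sX\<^sup>2)) \<le> ereal P"
  defines "f \<equiv> RN_deriv (gauss mX (sX\<^sup>2)) p"
  shows "f \<in> borel_measurable borel"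
    and "p = density lborel (\<lambda>x. ennreal (normal_density mX sX x) * f x)"
    and "AE x in p. 0 < f x \<and> f x \<noteq> \<infinity>"
    and "integrable p (\<lambda>x. ln (enn2real (f x)))" "(\<integral>x. ln (enn2real (f x)) \<partial>p) \<le> P"
proof -
  interpret p: prob_space p by (rule p)
  define G where "G = density lborel (normal_density mX sX)"
  interpret G: prob_space G unfolding G_def by (rule prob_space_normal_density[OF sX])
  have G_eq: "gauss mX (sX\<^sup>2) = G" using sX by (simp add: gauss_def G_def)
  note KL = phi_KL_le_ereal_D[OF KL[unfolded G_eq]]
  have "sets G = sets borel" by (simp add: G_def)
  then show "f \<in> borel_measurable borel"
    using borel_measurable_RN_deriv[of G p] unfolding f_def G_eq
    by (subst (asm) measurable_cong_sets[OF _ refl])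
  show "p = density lborel (\<lambda>x. ennreal (normal_density mX sX x) * f x)"
    using G.density_RN_deriv[of p] KL unfolding f_def G_eq G_def by (simp add: density_density_eq)
  show "AE x in p. 0 < f x \<and> f x \<noteq> \<infinity>"
    unfolding f_def G_eq using KL by (intro G.AE_RN_deriv_pos_finite p.sigma_finite_measure_axioms) auto
  show "integrable p (\<lambda>x. ln (enn2real (f x)))" "(\<integral>x. ln (enn2real (f x)) \<partial>p) \<le> P"
    unfolding f_def G_eq using KL by auto
qed

lemma absolutely_continuous_if_phi_KL_gauss_finite:
  assumes "s2 > 0" "phi_KL p (gauss m s2) \<le> ereal c"
  shows "absolutely_continuous lborel p"
proof -
  have "absolutely_continuous (gauss m s2) p" by (rule phi_KL_le_ereal_D(2)[OF assms(2)])
  moreover have "absolutely_continuous lborel (gauss m s2)"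
    using assms(1) unfolding gauss_def by (simp add: absolutely_continuousI_density)
  ultimately show ?thesis unfolding absolutely_continuous_def by blast
qed

lemma mutual_info_le_ereal_D:
  fixes J :: "(real \<times> real) measure"
  assumes J: "prob_space J" "sets J = sets (borel \<Otimes>\<^sub>M borel)" and MI: "mutual_info J \<le> ereal r"
  defines "\<rho> \<equiv> RN_deriv (distr J borel fst \<Otimes>\<^sub>M distr J borel snd) J"
  shows "\<rho> \<in> borel_measurable (borel \<Otimes>\<^sub>M borel)"
    and "J = density (distr J borel fst \<Otimes>\<^sub>M distr J borel snd) \<rho>"
    and "AE z in J. 0 < \<rho> z \<and> \<rho> z \<noteq> \<infinity>"
    and "integrable J (\<lambda>z. ln (enn2real (\<rho> z)))" "(\<integral>z. ln (enn2real (\<rho> z)) \<partial>J) \<le> r"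
proof -
  interpret J: prob_space J by (rule J(1))
  define M where "M = distr J borel fst \<Otimes>\<^sub>M distr J borel snd"
  have measJ: "\<And>N. measurable J N = measurable (borel \<Otimes>\<^sub>M borel) N"
    by (rule measurable_cong_sets[OF J(2) refl])
  interpret pQ: pair_prob_space "distr J borel fst" "distr J borel snd"
    by (simp add: pair_prob_space_def pair_sigma_finite_def prob_space_imp_sigma_finite
        J.prob_space_distr measJ)
  interpret M: prob_space M unfolding M_def by (rule pQ.P.prob_space_axioms)
  have "sets M = sets (borel \<Otimes>\<^sub>M borel)"
    unfolding M_def by (rule sets_pair_measure_cong) simp_all
  then show "\<rho> \<in> borel_measurable (borel \<Otimes>\<^sub>M borel)"
    using borel_measurable_RN_deriv[of M J] unfolding \<rho>_def M_def[symmetric]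
    by (subst (asm) measurable_cong_sets[OF _ refl])
  note MI = phi_KL_le_ereal_D[OF MI[unfolded mutual_info_def M_def[symmetric]]]
  show "J = density (distr J borel fst \<Otimes>\<^sub>M distr J borel snd) \<rho>"
    unfolding \<rho>_def M_def[symmetric] using MI by (intro M.density_RN_deriv[symmetric]) auto
  show "AE z in J. 0 < \<rho> z \<and> \<rho> z \<noteq> \<infinity>"
    unfolding \<rho>_def M_def[symmetric] using MI
    by (intro M.AE_RN_deriv_pos_finite J.sigma_finite_measure_axioms) auto
  show "integrable J (\<lambda>z. ln (enn2real (\<rho> z)))" "(\<integral>z. ln (enn2real (\<rho> z)) \<partial>J) \<le> r"
    unfolding \<rho>_def M_def[symmetric] using MI by auto
qed

lemma (in prob_space) integrable_square_diff:
  fixes X :: "'a \<Rightarrow> real"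
  assumes "integrable M X" "integrable M (\<lambda>x. (X x)\<^sup>2)"
  shows "integrable M (\<lambda>x. (X x - c)\<^sup>2)"
proof -
  have "integrable M (\<lambda>x. (X x)\<^sup>2 - 2 * c * X x + c\<^sup>2)" using assms by simp
  then show ?thesis by (simp add: power2_eq_square algebra_simps)
qed

lemma (in prob_space) expectation_square_diff:
  fixes X :: "'a \<Rightarrow> real"
  assumes "integrable M X" "integrable M (\<lambda>x. (X x)\<^sup>2)"
  shows "expectation (\<lambda>x. (X x - c)\<^sup>2) = variance X + (expectation X - c)\<^sup>2"
proof -
  let ?m = "expectation X"
  have "(\<lambda>x. (X x - c)\<^sup>2) = (\<lambda>x. (X x - ?m)\<^sup>2 + 2 * (?m - c) * X x + (c\<^sup>2 - ?m\<^sup>2))"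
    by (rule ext) (simp add: power2_eq_square algebra_simps)
  then have "expectation (\<lambda>x. (X x - c)\<^sup>2) = variance X + 2 * (?m - c) * ?m + (c\<^sup>2 - ?m\<^sup>2)"
    using integrable_square_diff[OF assms] assms(1) by (simp add: prob_space)
  then show ?thesis by (simp add: power2_eq_square algebra_simps)
qed

lemma integrable_id_if_square_integrable:
  fixes p :: "real measure"
  assumes "prob_space p" "sets p = sets borel" "integrable p (\<lambda>x. x\<^sup>2)"
  shows "integrable p (\<lambda>x. x)"
proof -
  interpret p: prob_space p by (rule assms(1))
  have measp: "\<And>N. measurable p N = measurable borel N" by (rule measurable_cong_sets[OF assms(2) refl])
  show ?thesis by (rule p.square_integrable_imp_integrable[OF _ assms(3)]) (simp add: measp)
qed

lemma variance_pos_if_absolutely_continuous: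
  fixes p :: "real measure"
  assumes p: "prob_space p" "sets p = sets borel"
    and ac: "absolutely_continuous lborel p" and sq: "integrable p (\<lambda>x. x\<^sup>2)"
  shows "0 < (\<integral>x. (x - (\<integral>x. x \<partial>p))\<^sup>2 \<partial>p)"
proof -
  interpret p: prob_space p by (rule p(1))
  define m where "m = (\<integral>x. x \<partial>p)"
  have x_int: "integrable p (\<lambda>x. x)" using p sq by (rule integrable_id_if_square_integrable)
  have "{m} \<in> null_sets lborel" by (simp add: null_sets_def)
  then have "{m} \<in> null_sets p" using ac unfolding absolutely_continuous_def by blast
  then have no_atom: "AE x in p. x \<noteq> m" using AE_not_in by fastforce
  have "(\<integral>x. (x - m)\<^sup>2 \<partial>p) \<noteq> 0"
  proof
    assume "(\<integral>x. (x - m)\<^sup>2 \<partial>p) = 0"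
    then have "AE x in p. (x - m)\<^sup>2 = 0"
      using integral_nonneg_eq_0_iff_AE[OF p.integrable_square_diff[OF x_int sq]] by simp
    with no_atom have "AE x in p. False" by eventually_elim simp
    then show False by (simp add: p.AE_False)
  qed
  moreover have "0 \<le> (\<integral>x. (x - m)\<^sup>2 \<partial>p)" by simp
  ultimately show ?thesis unfolding m_def by linarith
qed

lemma integral_fst_of_marginal:
  fixes J :: "('a \<times> 'b) measure" and u :: "'a \<Rightarrow> real"
  assumes "sets J = sets (M \<Otimes>\<^sub>M N)" "distr J M fst = p" "integrable p u"
  shows "integrable J (\<lambda>z. u (fst z))" "(\<integral>z. u (fst z) \<partial>J) = (\<integral>x. u x \<partial>p)"
proof -
  have measJ: "\<And>N'. measurable J N' = measurable (M \<Otimes>\<^sub>M N) N'"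
    by (rule measurable_cong_sets[OF assms(1) refl])
  have [measurable]: "u \<in> borel_measurable M"
    using borel_measurable_integrable[OF assms(3)] unfolding assms(2)[symmetric] by simp
  show "integrable J (\<lambda>z. u (fst z))" "(\<integral>z. u (fst z) \<partial>J) = (\<integral>x. u x \<partial>p)"
    using assms(3) unfolding assms(2)[symmetric] by (simp_all add: integrable_distr_eq integral_distr measJ)
qed

lemma (in prob_space) integral_ln_nonpos:
  assumes h: "h \<in> borel_measurable M" "AE x in M. 0 < h x" "(\<integral>\<^sup>+x. ennreal (h x) \<partial>M) \<le> 1"
    and ln_h: "integrable M (\<lambda>x. ln (h x))"
  shows "(\<integral>x. ln (h x) \<partial>M) \<le> 0"
proof -
  have h_nonneg: "AE x in M. 0 \<le> h x" using h(2) by eventually_elim simp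
  have "(\<integral>\<^sup>+x. ennreal (h x) \<partial>M) < \<infinity>"
    using h(3) by (metis ennreal_one_less_top infinity_ennreal_def le_less_trans)
  then have h_int: "integrable M h"
    using h(1) h_nonneg by (intro integrableI_nonneg) auto
  have "ennreal (\<integral>x. h x \<partial>M) \<le> 1"
    using h(3) h_int h_nonneg by (subst nn_integral_eq_integral[symmetric]) auto
  then have h_le: "(\<integral>x. h x \<partial>M) \<le> 1" by (simp add: ennreal_le_1)
  have "AE x in M. ln (h x) \<le> h x - 1"
    using h(2) by eventually_elim (rule ln_le_minus_one)
  then have "(\<integral>x. ln (h x) \<partial>M) \<le> (\<integral>x. h x - 1 \<partial>M)"
    using ln_h h_int by (intro integral_mono_AE) auto
  also have "\<dots> = (\<integral>x. h x \<partial>M) - 1" using h_int by (simp add: prob_space)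
  finally show ?thesis using h_le by simp
qed

text \<open>For \<open>r = \<infinity>\<close> the left side is \<open>\<infinity> \<cdot> 0 = 0\<close>: \<open>enn2real \<infinity> = 0\<close> and division by zero yields zero.\<close>

lemma ennreal_mult_divide_enn2real_le:
  assumes "0 \<le> a" "0 \<le> b"
  shows "r * ennreal (a / (b * enn2real r)) \<le> ennreal (a / b)"
proof (cases r)
  case (real t)
  show ?thesis
  proof (cases "t = 0")
    case False
    with real assms have "r * ennreal (a / (b * enn2real r)) = ennreal (t * (a / (b * t)))"
      by (simp add: ennreal_mult[symmetric])
    with False show ?thesis by simp
  qed (use real in simp)
qed simp

lemma nn_integral_kernel_ratio_le_1:
  fixes p Q :: "real measure" and f :: "real \<Rightarrow> ennreal"
    and \<rho> :: "real \<times> real \<Rightarrow> ennreal" and k :: "real \<times> real \<Rightarrow> real"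
  assumes p: "prob_space p" "p = density lborel f" and Q: "prob_space Q" "sets Q = sets borel"
    and [measurable]: "f \<in> borel_measurable borel" "\<rho> \<in> borel_measurable (borel \<Otimes>\<^sub>M borel)"
      "k \<in> borel_measurable (borel \<Otimes>\<^sub>M borel)"
    and k_nonneg: "\<And>z. 0 \<le> k z" and k_int: "\<And>v. (\<integral>\<^sup>+x. ennreal (k (x, v)) \<partial>lborel) \<le> 1"
  shows "(\<integral>\<^sup>+z. ennreal (k z / (enn2real (f (fst z)) * enn2real (\<rho> z))) \<partial>density (p \<Otimes>\<^sub>M Q) \<rho>) \<le> 1"
proof -
  interpret pQ: pair_prob_space p Q
    using p(1) Q(1) by (simp add: pair_prob_space_def pair_sigma_finite_def prob_space_imp_sigma_finite)
  have "sets (p \<Otimes>\<^sub>M Q) = sets (borel \<Otimes>\<^sub>M borel)"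
    using p(2) Q(2) by (intro sets_pair_measure_cong) auto
  then have meas_pQ: "\<And>N. measurable (p \<Otimes>\<^sub>M Q) N = measurable (borel \<Otimes>\<^sub>M borel) N"
    by (rule measurable_cong_sets) simp
  have "(\<integral>\<^sup>+z. ennreal (k z / (enn2real (f (fst z)) * enn2real (\<rho> z))) \<partial>density (p \<Otimes>\<^sub>M Q) \<rho>)
      = (\<integral>\<^sup>+z. \<rho> z * ennreal (k z / (enn2real (f (fst z)) * enn2real (\<rho> z))) \<partial>(p \<Otimes>\<^sub>M Q))"
    by (subst nn_integral_density) (auto simp: meas_pQ)
  also have "\<dots> \<le> (\<integral>\<^sup>+z. ennreal (k z / enn2real (f (fst z))) \<partial>(p \<Otimes>\<^sub>M Q))"
    by (intro nn_integral_mono ennreal_mult_divide_enn2real_le k_nonneg) simp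
  also have "\<dots> = (\<integral>\<^sup>+v. (\<integral>\<^sup>+x. ennreal (k (x, v) / enn2real (f x)) \<partial>p) \<partial>Q)"
    by (subst pQ.nn_integral_snd[symmetric]) (auto simp: meas_pQ)
  also have "\<dots> \<le> (\<integral>\<^sup>+v. 1 \<partial>Q)"
  proof (rule nn_integral_mono)
    fix v
    have "(\<integral>\<^sup>+x. ennreal (k (x, v) / enn2real (f x)) \<partial>p)
        = (\<integral>\<^sup>+x. f x * ennreal (k (x, v) / (1 * enn2real (f x))) \<partial>lborel)"
      unfolding p(2) by (subst nn_integral_density) auto
    also have "\<dots> \<le> (\<integral>\<^sup>+x. ennreal (k (x, v) / 1) \<partial>lborel)"
      by (intro nn_integral_mono ennreal_mult_divide_enn2real_le k_nonneg) simp
    finally show "(\<integral>\<^sup>+x. ennreal (k (x, v) / enn2real (f x)) \<partial>p) \<le> 1"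
      using k_int[of v] by simp
  qed
  also have "\<dots> = 1" by (simp add: pQ.M2.emeasure_space_1)
  finally show ?thesis .
qed

lemma integral_ln_kernel_ratio_nonpos:
  fixes p Q :: "real measure" and f :: "real \<Rightarrow> ennreal"
    and \<rho> :: "real \<times> real \<Rightarrow> ennreal" and k :: "real \<times> real \<Rightarrow> real"
  assumes p: "prob_space p" "p = density lborel f" and Q: "prob_space Q" "sets Q = sets borel"
    and J: "prob_space J" "J = density (p \<Otimes>\<^sub>M Q) \<rho>"
    and [measurable]: "f \<in> borel_measurable borel" "\<rho> \<in> borel_measurable (borel \<Otimes>\<^sub>M borel)"
      "k \<in> borel_measurable (borel \<Otimes>\<^sub>M borel)"
    and k_pos: "\<And>z. 0 < k z" and k_int: "\<And>v. (\<integral>\<^sup>+x. ennreal (k (x, v)) \<partial>lborel) \<le> 1"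
    and pos: "AE z in J. 0 < f (fst z) \<and> f (fst z) \<noteq> \<infinity> \<and> 0 < \<rho> z \<and> \<rho> z \<noteq> \<infinity>"
    and int: "integrable J (\<lambda>z. ln (k z) - ln (enn2real (f (fst z))) - ln (enn2real (\<rho> z)))"
  shows "(\<integral>z. ln (k z) - ln (enn2real (f (fst z))) - ln (enn2real (\<rho> z)) \<partial>J) \<le> 0"
proof -
  interpret J: prob_space J by (rule J(1))
  have "sets J = sets (p \<Otimes>\<^sub>M Q)" unfolding J(2) by simp
  also have "\<dots> = sets (borel \<Otimes>\<^sub>M borel)"
    by (rule sets_pair_measure_cong) (simp_all add: p(2) Q(2))
  finally have measJ: "\<And>N. measurable J N = measurable (borel \<Otimes>\<^sub>M borel) N"
    by (rule measurable_cong_sets[OF _ refl])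
  define h where "h z = k z / (enn2real (f (fst z)) * enn2real (\<rho> z))" for z
  have [measurable]: "h \<in> borel_measurable (borel \<Otimes>\<^sub>M borel)" unfolding h_def by measurable
  have ln_h: "AE z in J. 0 < h z \<and>
      ln (h z) = ln (k z) - ln (enn2real (f (fst z))) - ln (enn2real (\<rho> z))"
    using pos
  proof eventually_elim
    case (elim z)
    then have "0 < enn2real (f (fst z))" "0 < enn2real (\<rho> z)"
      by (simp_all add: enn2real_positive_iff less_top)
    then show ?case using k_pos[of z] by (simp add: h_def ln_div ln_mult)
  qed
  then have h_pos: "AE z in J. 0 < h z"
    and ln_h_eq: "AE z in J. ln (k z) - ln (enn2real (f (fst z))) - ln (enn2real (\<rho> z)) = ln (h z)"
    by (eventually_elim, simp)+
  have "(\<integral>z. ln (h z) \<partial>J) \<le> 0"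
  proof (rule J.integral_ln_nonpos[OF _ h_pos])
    show "(\<integral>\<^sup>+z. ennreal (h z) \<partial>J) \<le> 1"
      unfolding h_def J(2)
      by (rule nn_integral_kernel_ratio_le_1[OF p Q]) (use k_pos k_int in \<open>simp_all add: less_imp_le\<close>)
    show "integrable J (\<lambda>z. ln (h z))"
      by (rule integrable_cong_AE_imp[OF int _ ln_h_eq]) (simp add: measJ)
  qed (simp add: measJ)
  moreover have "(\<integral>z. ln (h z) \<partial>J) = (\<integral>z. ln (k z) - ln (enn2real (f (fst z))) - ln (enn2real (\<rho> z)) \<partial>J)"
    by (rule integral_cong_AE[OF _ _ ln_h_eq, symmetric]) (simp_all add: measJ)
  ultimately show ?thesis by simp
qed

lemma gaussian_test_channel_bound:
  fixes mX sX r P d :: real and p :: "real measure" and J :: "(real \<times> real) measure"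
  assumes sX: "sX > 0" and d: "d > 0"
    and p: "prob_space p" "sets p = sets borel" "integrable p (\<lambda>x. x\<^sup>2)"
    and KL: "phi_KL p (gauss mX (sX\<^sup>2)) \<le> ereal P"
    and J: "prob_space J" "sets J = sets (borel \<Otimes>\<^sub>M borel)" "distr J borel fst = p"
    and MI: "mutual_info J \<le> ereal r"
    and dist_int: "integrable J (\<lambda>z. (fst z - snd z)\<^sup>2)"
  shows "ln (sX\<^sup>2 / d) / 2 + (\<integral>x. (x - mX)\<^sup>2 \<partial>p) / (2 * sX\<^sup>2)
           - (\<integral>z. (fst z - snd z)\<^sup>2 \<partial>J) / (2 * d) \<le> P + r"
proof -
  interpret p: prob_space p by (rule p(1))
  interpret J: prob_space J by (rule J(1))
  have measJ: "\<And>N. measurable J N = measurable (borel \<Otimes>\<^sub>M borel) N"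
    by (rule measurable_cong_sets[OF J(2) refl])
  define f where "f = RN_deriv (gauss mX (sX\<^sup>2)) p"
  define \<rho> where "\<rho> = RN_deriv (p \<Otimes>\<^sub>M distr J borel snd) J"
  note f = phi_KL_gauss_le_ereal_D[OF sX p(1) KL, folded f_def]
  note \<rho> = mutual_info_le_ereal_D[OF J(1,2) MI, unfolded J(3), folded \<rho>_def]
  note [measurable] = f(1) \<rho>(1)
  define g where "g = normal_density mX sX"
  define fp where "fp x = ennreal (g x) * f x" for x
  define \<phi> where "\<phi> z = normal_density (snd z) (sqrt d) (fst z)" for z
  define L where "L z = ln (sX\<^sup>2 / d) / 2 - (fst z - snd z)\<^sup>2 / (2 * d) + (fst z - mX)\<^sup>2 / (2 * sX\<^sup>2)
      - ln (enn2real (f (fst z))) - ln (enn2real (\<rho> z))" for z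
  have \<phi>_pos: "\<And>z. 0 < \<phi> z" and g_pos: "\<And>x. 0 < g x"
    using d sX by (simp_all add: \<phi>_def g_def normal_density_pos)
  have [measurable]: "\<phi> \<in> borel_measurable (borel \<Otimes>\<^sub>M borel)" "g \<in> borel_measurable borel"
    unfolding \<phi>_def g_def normal_density_def by measurable
  have \<phi>_int: "(\<integral>\<^sup>+x. ennreal (\<phi> (x, v)) \<partial>lborel) = 1" for v
    using d by (simp add: \<phi>_def nn_integral_eq_integral normal_density_nonneg)
  have "AE z in J. 0 < f (fst z) \<and> f (fst z) \<noteq> \<infinity>"
    using f(3) unfolding J(3)[symmetric] by (subst (asm) AE_distr_iff) (auto simp: measJ)
  with \<rho>(3) have pos_f_\<rho>: "AE z in J. 0 < f (fst z) \<and> f (fst z) \<noteq> \<infinity> \<and> 0 < \<rho> z \<and> \<rho> z \<noteq> \<infinity>"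
    by eventually_elim simp
  then have pos: "AE z in J. 0 < fp (fst z) \<and> fp (fst z) \<noteq> \<infinity> \<and> 0 < \<rho> z \<and> \<rho> z \<noteq> \<infinity>"
    by eventually_elim (use g_pos in \<open>simp add: fp_def ennreal_mult_eq_top_iff ennreal_zero_less_mult_iff\<close>)
  from pos_f_\<rho> have ln_ratio:
    "AE z in J. ln (\<phi> z) - ln (enn2real (fp (fst z))) - ln (enn2real (\<rho> z)) = L z"
  proof eventually_elim
    case (elim z)
    then have "0 < enn2real (f (fst z))" by (simp add: enn2real_positive_iff less_top)
    then have "ln (enn2real (fp (fst z))) = ln (g (fst z)) + ln (enn2real (f (fst z)))"
      using g_pos[of "fst z"] by (simp add: fp_def enn2real_mult ln_mult)
    moreover have "ln (\<phi> z) - ln (g (fst z)) =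
        ln (sX\<^sup>2 / d) / 2 - (fst z - snd z)\<^sup>2 / (2 * d) + (fst z - mX)\<^sup>2 / (2 * sX\<^sup>2)"
      unfolding \<phi>_def g_def ln_normal_density[OF sX] ln_normal_density[of "sqrt d", simplified, OF d]
      using d sX by (simp add: ln_div ln_mult power2_commute field_simps)
    ultimately show ?case by (simp add: L_def)
  qed
  have x_int: "integrable p (\<lambda>x. x)" using p by (rule integrable_id_if_square_integrable)
  note sq_int = integral_fst_of_marginal[OF J(2,3) p.integrable_square_diff[OF x_int p(3), of mX]]
  note ln_f_int = integral_fst_of_marginal[OF J(2,3) f(4)]
  have L_int: "integrable J L"
    unfolding L_def using dist_int sq_int ln_f_int \<rho>(4)
    by (intro Bochner_Integration.integrable_diff Bochner_Integration.integrable_add integrable_divide) auto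
  have Q: "prob_space (distr J borel snd)" by (rule J.prob_space_distr) (simp add: measJ)
  have "(\<integral>z. L z \<partial>J) = (\<integral>z. ln (\<phi> z) - ln (enn2real (fp (fst z))) - ln (enn2real (\<rho> z)) \<partial>J)"
    by (rule integral_cong_AE[OF _ _ ln_ratio, symmetric]) (simp_all add: measJ L_def fp_def)
  also have "\<dots> \<le> 0"
  proof (rule integral_ln_kernel_ratio_nonpos[OF p(1) _ _ _ J(1) \<rho>(2) _ _ _ \<phi>_pos _ pos])
    show "integrable J (\<lambda>z. ln (\<phi> z) - ln (enn2real (fp (fst z))) - ln (enn2real (\<rho> z)))"
      by (rule integrable_cong_AE_imp[OF L_int _ AE_symmetric[OF ln_ratio]]) (simp add: measJ fp_def)
  qed (use f(2) \<phi>_int Q in \<open>simp_all add: fp_def g_def\<close>)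
  finally have "(\<integral>z. L z \<partial>J) \<le> 0" .
  moreover have "(\<integral>z. L z \<partial>J) = ln (sX\<^sup>2 / d) / 2 - (\<integral>z. (fst z - snd z)\<^sup>2 \<partial>J) / (2 * d)
      + (\<integral>x. (x - mX)\<^sup>2 \<partial>p) / (2 * sX\<^sup>2) - (\<integral>x. ln (enn2real (f x)) \<partial>p) - (\<integral>z. ln (enn2real (\<rho> z)) \<partial>J)"
    unfolding L_def using dist_int sq_int ln_f_int \<rho>(4) by (simp add: J.prob_space)
  ultimately show ?thesis using f(5) \<rho>(5) by linarith
qed

lemma distortion_ge_for_coupling:
  fixes mX sX r P :: real and p :: "real measure" and J :: "(real \<times> real) measure"
  assumes sX: "sX > 0"
    and p: "prob_space p" "sets p = sets borel" "integrable p (\<lambda>x. x\<^sup>2)"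
    and KL: "phi_KL p (gauss mX (sX\<^sup>2)) \<le> ereal P"
    and J: "prob_space J" "sets J = sets (borel \<Otimes>\<^sub>M borel)" "distr J borel fst = p"
    and MI: "mutual_info J \<le> ereal r"
  defines "m \<equiv> \<integral>x. x \<partial>p"
    and "v \<equiv> \<integral>x. (x - (\<integral>x. x \<partial>p))\<^sup>2 \<partial>p"
  shows "ennreal (v * exp (-2 * (r + P - real_of_ereal (phi_KL (gauss m v) (gauss mX (sX\<^sup>2))))))
           \<le> (\<integral>\<^sup>+z. ennreal ((fst z - snd z)\<^sup>2) \<partial>J)"
proof -
  interpret p: prob_space p by (rule p(1))
  have v_pos: "0 < v"
    unfolding v_def m_def using absolutely_continuous_if_phi_KL_gauss_finite[OF _ KL] sX p
    by (intro variance_pos_if_absolutely_continuous) auto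
  define K where "K = ln (sX\<^sup>2 / v) / 2 + (v + (m - mX)\<^sup>2) / (2 * sX\<^sup>2) - 1 / 2"
  define T where "T = v * exp (-2 * (r + P - K))"
  have T_pos: "0 < T" using v_pos by (simp add: T_def)
  have "real_of_ereal (phi_KL (gauss m v) (gauss mX (sX\<^sup>2))) = K"
    unfolding K_def using phi_KL_gauss[OF v_pos sX] by simp
  moreover have "ennreal T \<le> (\<integral>\<^sup>+z. ennreal ((fst z - snd z)\<^sup>2) \<partial>J)"
  proof (cases "(\<integral>\<^sup>+z. ennreal ((fst z - snd z)\<^sup>2) \<partial>J) = \<infinity>")
    case False
    have meas_J: "measurable J borel = measurable (borel \<Otimes>\<^sub>M borel) borel"
      by (rule measurable_cong_sets[OF J(2) refl])
    have dist_int: "integrable J (\<lambda>z. (fst z - snd z)\<^sup>2)"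
      using False by (intro integrableI_nonneg) (auto simp: meas_J top.not_eq_extremum)
    define D where "D = (\<integral>z. (fst z - snd z)\<^sup>2 \<partial>J)"
    have x_int: "integrable p (\<lambda>x. x)" using p by (rule integrable_id_if_square_integrable)
    have bound: "ln (sX\<^sup>2 / T) / 2 + (\<integral>x. (x - mX)\<^sup>2 \<partial>p) / (2 * sX\<^sup>2) - D / (2 * T) \<le> P + r"
      unfolding D_def by (rule gaussian_test_channel_bound[OF sX T_pos p KL J MI dist_int])
    have second_moment: "(\<integral>x. (x - mX)\<^sup>2 \<partial>p) = v + (m - mX)\<^sup>2"
      using p.expectation_square_diff[OF x_int p(3), of mX] by (simp add: m_def v_def)
    have ln_T: "ln (sX\<^sup>2 / T) / 2 = ln (sX\<^sup>2 / v) / 2 + (r + P - K)"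
      unfolding T_def using sX v_pos by (simp add: ln_div ln_mult)
    have "1 / 2 \<le> D / (2 * T)"
      using bound unfolding second_moment ln_T K_def by linarith
    then have "T \<le> D" using T_pos by (simp add: field_simps)
    moreover have "ennreal D = (\<integral>\<^sup>+z. ennreal ((fst z - snd z)\<^sup>2) \<partial>J)"
      unfolding D_def using dist_int by (subst nn_integral_eq_integral) auto
    ultimately show ?thesis using ennreal_leI by metis
  qed simp
  ultimately show ?thesis by (simp add: T_def)
qed

theorem lemma2:
  fixes mu_X sigma_X R R_c P :: real and p :: "real measure"
  assumes "sigma_X > 0" and "R \<ge> 0" and "R_c \<ge> 0" and "P \<ge> 0"
    and "prob_space p" and "sets p = sets borel"
    and "integrable p (\<lambda>x. x\<^sup>2)"
    and "phi_KL p (gauss mu_X (sigma_X\<^sup>2)) \<le> ereal P"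
  shows "let mu_hat = (\<integral>x. x \<partial>p);
             var_hat = (\<integral>x. (x - mu_hat)\<^sup>2 \<partial>p)
         in distortion_rate (R + R_c) p \<ge>
              ennreal (var_hat * exp (-2 * (R + R_c + P
                 - real_of_ereal (phi_KL (gauss mu_hat var_hat) (gauss mu_X (sigma_X\<^sup>2))))))"
  unfolding Let_def distortion_rate_def
  by (rule INF_greatest, elim CollectE conjE, rule distortion_ge_for_coupling[OF assms(1,5-8)],
      assumption+)

end
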